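(* Let $V$ be a finite-dimensional real vector space of even dimension, $\omega_0$ a non-degenerate alternating two-form on $V$, and $\omega_1$ any alternating two-form on $V$. If the set $\mathcal{J}_\tau(\omega_0,\omega_1)$ of complex structures $J$ on $V$ which are tamed by $\omega_0$ and tamed by $\omega_1$ is non-empty, then it is contractible.
   Context: $J$ is tamed by $\omega_0$ if $\omega_0(v,Jv)>0$ for all $v\ne0$. $J$ is tamed by $\omega_1$ if $\omega_1(v,Jv)\ge 0$ for all $v\in V$, with equality if and only if $v\in\ker\omega_1=\{v:\iota_v\omega_1=0\}$. The set is topologized as a subset of $\mathrm{End}(V)$. *)

theory Defs
  imports "HOL-Analysis.Analysis"
begin

text \<open>V is modelled as real^'n (dimension CARD('n)); End(V) as real^'n^'n with its
  standard (Euclidean) topology; J acts on v by J *v v.\<close>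

definition alternating_form :: "(real^'n \<Rightarrow> real^'n \<Rightarrow> real) \<Rightarrow> bool" where
  "alternating_form \<omega> \<longleftrightarrow> bilinear \<omega> \<and> (\<forall>v. \<omega> v v = 0)"

definition form_kernel :: "(real^'n \<Rightarrow> real^'n \<Rightarrow> real) \<Rightarrow> (real^'n) set" where
  "form_kernel \<omega> = {v. \<forall>w. \<omega> v w = 0}"

definition nondegenerate_form :: "(real^'n \<Rightarrow> real^'n \<Rightarrow> real) \<Rightarrow> bool" where
  "nondegenerate_form \<omega> \<longleftrightarrow> form_kernel \<omega> = {0}"

definition complex_structures :: "(real^'n^'n) set" where
  "complex_structures = {J. J ** J = - mat 1}"

definition tamed_strict :: "(real^'n \<Rightarrow> real^'n \<Rightarrow> real) \<Rightarrow> real^'n^'n \<Rightarrow> bool" where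
  "tamed_strict \<omega> J \<longleftrightarrow> (\<forall>v. v \<noteq> 0 \<longrightarrow> \<omega> v (J *v v) > 0)"

definition tamed_degenerate :: "(real^'n \<Rightarrow> real^'n \<Rightarrow> real) \<Rightarrow> real^'n^'n \<Rightarrow> bool" where
  "tamed_degenerate \<omega> J \<longleftrightarrow>
     (\<forall>v. \<omega> v (J *v v) \<ge> 0 \<and> (\<omega> v (J *v v) = 0 \<longleftrightarrow> v \<in> form_kernel \<omega>))"

definition J_tau :: "(real^'n \<Rightarrow> real^'n \<Rightarrow> real) \<Rightarrow> (real^'n \<Rightarrow> real^'n \<Rightarrow> real) \<Rightarrow> (real^'n^'n) set" where
  "J_tau \<omega>0 \<omega>1 = {J \<in> complex_structures. tamed_strict \<omega>0 J \<and> tamed_degenerate \<omega>1 J}"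

end

theory Submission
  imports Defs
begin

text \<open>Fix N \<in> J_tau \<omega>0 \<omega>1 and parametrise complex structures by the Cayley transform
  J = N (1 + S) (1 - S)^-1, i.e. J (1 - S) = N (1 + S); then J^2 = -1 corresponds to S
  anticommuting with N. Substituting v = (1 - S) w turns the taming condition \<omega>(v, J v) > 0
  into \<omega>(w - S w, N (w + S w)) > 0, and because \<omega>(u, N u) \<ge> 0 the left-hand side is a
  concave function of S. A structure tamed by the degenerate \<omega>1 preserves ker \<omega>1, so
  restricting to S preserving ker \<omega>1 loses nothing. The admissible S thus form a convex
  set, which the Cayley transform maps homeomorphically onto J_tau \<omega>0 \<omega>1.\<close>

section \<open>Matrix algebra and continuity of the inverse\<close>

lemma matrix_add_rdistrib: "((A::'a::semiring_1^'n^'m) + B) ** C = A ** C + B ** C"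
  by (vector matrix_matrix_mult_def sum.distrib[symmetric] field_simps)

lemma matrix_diff_ldistrib: "(A::'a::ring_1^'n^'m) ** (B - C) = A ** B - A ** C"
  by (vector matrix_matrix_mult_def sum_subtractf[symmetric] field_simps)

lemma matrix_diff_rdistrib: "((A::'a::ring_1^'n^'m) - B) ** C = A ** C - B ** C"
  by (vector matrix_matrix_mult_def sum_subtractf[symmetric] field_simps)

lemma matrix_mul_uminus_left: "(- (A::'a::ring_1^'n^'m)) ** B = - (A ** B)"
  by (vector matrix_matrix_mult_def sum_negf[symmetric])

lemma matrix_mul_uminus_right: "(A::'a::ring_1^'n^'m) ** (- B) = - (A ** B)"
  by (vector matrix_matrix_mult_def sum_negf[symmetric])

lemma matrix_inv_right: "invertible A \<Longrightarrow> A ** matrix_inv A = mat 1"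
  unfolding invertible_def matrix_inv_def by (rule someI2_ex) auto

lemma matrix_inv_left: "invertible A \<Longrightarrow> matrix_inv A ** A = mat 1"
  unfolding invertible_def matrix_inv_def by (rule someI2_ex) auto

lemma matrix_inv_unique:
  fixes A :: "'a::field^'n^'n"
  assumes "A ** B = mat 1"
  shows "matrix_inv A = B"
proof -
  have "invertible A"
    using assms invertible_right_inverse by blast
  have "matrix_inv A = matrix_inv A ** (A ** B)"
    by (simp add: assms)
  also have "\<dots> = B"
    by (simp add: matrix_mul_assoc matrix_inv_left \<open>invertible A\<close>)
  finally show ?thesis .
qed

lemma invertible_iff_ker_zero:
  fixes A :: "'a::field^'n^'n"
  shows "invertible A \<longleftrightarrow> (\<forall>x. A *v x = 0 \<longrightarrow> x = 0)"
  by (simp add: invertible_left_inverse matrix_left_invertible_ker)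

lemma invertible_matrix_inv: "invertible (A::'a::field^'n^'n) \<Longrightarrow> invertible (matrix_inv A)"
  using invertible_right_inverse matrix_inv_left by blast

lemma matrix_inv_cramer:
  fixes A :: "real^'n^'n"
  assumes "invertible A"
  shows "matrix_inv A =
    (\<chi> k j. det (\<chi> i l. if l = k then (if i = j then 1 else 0) else A $ i $ l) / det A)"
proof -
  have "matrix_inv A $ k $ j =
      det (\<chi> i l. if l = k then (if i = j then 1 else 0) else A $ i $ l) / det A" for k j
  proof -
    let ?e = "(\<chi> i. if i = j then 1 else 0) :: real^'n"
    have "A *v (\<chi> k. matrix_inv A $ k $ j) = ?e"
      using matrix_inv_right[OF assms]
      by (simp add: vec_eq_iff matrix_vector_mult_def matrix_matrix_mult_def mat_def)
    then have "(\<chi> k. matrix_inv A $ k $ j) = (\<chi> k. det (\<chi> i l. if l = k then ?e $ i else A $ i $ l) / det A)"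
      using cramer[of A] assms invertible_det_nz by blast
    then show ?thesis
      by (simp only: vec_eq_iff vec_lambda_beta)
  qed
  then show ?thesis
    by (simp add: vec_eq_iff)
qed

lemma continuous_on_det: "continuous_on S (det :: real^'n^'n \<Rightarrow> real)"
  unfolding det_def by (intro continuous_intros)

lemma continuous_on_matrix_inv: "continuous_on {A::real^'n^'n. invertible A} matrix_inv"
proof -
  have entry: "continuous_on S (\<lambda>A::real^'n^'n. if l = k then c else A $ i $ l)" for S l k i c
    by (cases "l = k") (auto intro!: continuous_intros)
  have "continuous_on {A::real^'n^'n. invertible A}
      (\<lambda>A. \<chi> k j. det (\<chi> i l. if l = k then (if i = j then 1 else 0) else A $ i $ l) / det A)"
    by (intro continuous_intros continuous_on_compose2[OF continuous_on_det] entry)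
      (auto simp: invertible_det_nz)
  then show ?thesis
    by (rule continuous_on_eq) (simp add: matrix_inv_cramer)
qed

lemma continuous_on_matrix_mult [continuous_intros]:
  fixes f g :: "'a::topological_space \<Rightarrow> real^'n^'n"
  assumes "continuous_on S f" "continuous_on S g"
  shows "continuous_on S (\<lambda>x. f x ** g x)"
  unfolding matrix_matrix_mult_def using assms by (intro continuous_intros)

lemma matrix_inv_invariant_subspace:
  fixes A :: "real^'n^'n"
  assumes A: "invertible A" and K: "subspace K" and inv: "\<forall>k\<in>K. A *v k \<in> K"
    and k: "k \<in> K"
  shows "matrix_inv A *v k \<in> K"
proof -
  have "inj ((*v) A)"
    using A inj_matrix_vector_mult by blast
  then have "(*v) A ` K = K"
    using inv
    by (intro subspace_dim_equal linear_subspace_image K)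
      (auto simp: dim_image_eq inj_on_subset)
  then obtain k' where "k' \<in> K" "k = A *v k'"
    using k by blast
  then show ?thesis
    by (simp add: matrix_vector_mul_assoc matrix_inv_left[OF A])
qed

section \<open>Taming forms\<close>

lemma alternating_form_antisym:
  assumes "alternating_form \<omega>"
  shows "\<omega> u v = - \<omega> v u"
proof -
  have B: "bilinear \<omega>" and zero: "\<And>v. \<omega> v v = 0"
    using assms by (auto simp: alternating_form_def)
  have "0 = \<omega> (u + v) (u + v)"
    using zero by simp
  also have "\<dots> = \<omega> u u + \<omega> u v + \<omega> v u + \<omega> v v"
    using B by (simp add: bilinear_ladd bilinear_radd)
  finally show ?thesis
    using zero by simp
qed

lemma subspace_form_kernel: "bilinear \<omega> \<Longrightarrow> subspace (form_kernel \<omega>)"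
  unfolding subspace_def form_kernel_def
  by (auto simp: bilinear_ladd bilinear_lmul bilinear_lzero)

lemma tamed_degenerate_form_kernel_invariant:
  assumes alt: "alternating_form \<omega>" and tamed: "tamed_degenerate \<omega> J"
    and k: "k \<in> form_kernel \<omega>"
  shows "J *v k \<in> form_kernel \<omega>"
proof -
  have B: "bilinear \<omega>"
    using alt by (simp add: alternating_form_def)
  have "\<omega> v (J *v k) = 0" for v
  proof (rule ccontr)
    assume nz: "\<omega> v (J *v k) \<noteq> 0"
    \<comment> \<open>\<omega>(v + t k, J (v + t k)) is affine in t and never negative, so its slope vanishes\<close>
    define t where "t = - (\<bar>\<omega> v (J *v v)\<bar> + 1) / \<omega> v (J *v k)"
    have "\<omega> (v + t *\<^sub>R k) (J *v (v + t *\<^sub>R k)) = \<omega> v (J *v v) + t * \<omega> v (J *v k)"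
      using k B
      by (simp add: form_kernel_def bilinear_ladd bilinear_radd bilinear_lmul bilinear_rmul
          matrix_vector_right_distrib matrix_vector_mult_scaleR)
    also have "\<dots> < 0"
      using nz unfolding t_def by simp
    finally have "\<omega> (v + t *\<^sub>R k) (J *v (v + t *\<^sub>R k)) < 0" .
    moreover have "0 \<le> \<omega> (v + t *\<^sub>R k) (J *v (v + t *\<^sub>R k))"
      using tamed tamed_degenerate_def by blast
    ultimately show False
      by linarith
  qed
  then have "\<omega> (J *v k) v = 0" for v
    using alternating_form_antisym[OF alt, of "J *v k" v] by simp
  then show ?thesis
    by (simp add: form_kernel_def)
qed

definition tames_off :: "(real^'n \<Rightarrow> real^'n \<Rightarrow> real) \<Rightarrow> (real^'n) set \<Rightarrow> real^'n^'n \<Rightarrow> bool" where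
  "tames_off \<omega> K J \<longleftrightarrow> (\<forall>v. v \<notin> K \<longrightarrow> 0 < \<omega> v (J *v v))"

lemma tamed_strict_iff_tames_off: "tamed_strict \<omega> J \<longleftrightarrow> tames_off \<omega> {0} J"
  by (simp add: tamed_strict_def tames_off_def)

lemma tamed_degenerate_iff_tames_off: "tamed_degenerate \<omega> J \<longleftrightarrow> tames_off \<omega> (form_kernel \<omega>) J"
proof -
  have "\<omega> v (J *v v) = 0" if "v \<in> form_kernel \<omega>" for v
    using that by (simp add: form_kernel_def)
  then show ?thesis
    unfolding tamed_degenerate_def tames_off_def by (metis order_less_le order_refl)
qed

lemma tamed_strict_nonneg:
  assumes "bilinear \<omega>" and "tamed_strict \<omega> J"
  shows "0 \<le> \<omega> v (J *v v)"
  using assms by (cases "v = 0") (auto simp: tamed_strict_def bilinear_lzero less_imp_le)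

lemma tames_off_change_of_variables:
  fixes P :: "real^'n^'n"
  assumes P: "invertible P" and K: "subspace K" and inv: "\<forall>k\<in>K. P *v k \<in> K"
  shows "tames_off \<omega> K J \<longleftrightarrow> (\<forall>w. w \<notin> K \<longrightarrow> 0 < \<omega> (P *v w) (J *v (P *v w)))"
proof -
  have "w \<notin> K \<longleftrightarrow> P *v w \<notin> K" for w
    using matrix_inv_invariant_subspace[OF P K inv, of "P *v w"] inv
    by (auto simp: matrix_vector_mul_assoc matrix_inv_left[OF P])
  moreover have "v = P *v (matrix_inv P *v v)" for v
    by (simp add: matrix_vector_mul_assoc matrix_inv_right[OF P])
  ultimately show ?thesis
    unfolding tames_off_def by metis
qed

section \<open>The Cayley transform\<close>

definition cayley :: "real^'n^'n \<Rightarrow> real^'n^'n \<Rightarrow> real^'n^'n" where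
  "cayley N S = N ** (mat 1 + S) ** matrix_inv (mat 1 - S)"

definition cayley_inverse :: "real^'n^'n \<Rightarrow> real^'n^'n \<Rightarrow> real^'n^'n" where
  "cayley_inverse N J = mat 1 - 2 *\<^sub>R matrix_inv (mat 1 - N ** J)"

lemma cayley_relation:
  fixes N S :: "real^'n^'n"
  assumes "invertible (mat 1 - S)"
  shows "cayley N S ** (mat 1 - S) = N ** (mat 1 + S)"
  by (simp add: cayley_def matrix_inv_left[OF assms] flip: matrix_mul_assoc)

lemma cayley_eqI:
  fixes N S J :: "real^'n^'n"
  assumes "invertible (mat 1 - S)" and "J ** (mat 1 - S) = N ** (mat 1 + S)"
  shows "cayley N S = J"
  by (simp add: cayley_def matrix_inv_right[OF assms(1)] flip: assms(2) matrix_mul_assoc)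

lemma cayley_inverse_eqI:
  fixes N S J :: "real^'n^'n"
  assumes NN: "N ** N = - mat 1" and rel: "J ** (mat 1 - S) = N ** (mat 1 + S)"
  shows "cayley_inverse N J = S"
proof -
  have "(mat 1 - N ** J) ** (mat 1 - S) = (mat 1 - S) - (N ** N) ** (mat 1 + S)"
    by (simp add: matrix_diff_rdistrib rel flip: matrix_mul_assoc)
  also have "\<dots> = 2 *\<^sub>R mat 1"
    by (simp add: NN matrix_mul_uminus_left scaleR_2)
  finally have "(mat 1 - N ** J) ** ((1/2) *\<^sub>R (mat 1 - S)) = mat 1"
    by (simp add: matrix_scalar_ac scalar_matrix_assoc[symmetric])
  then have "matrix_inv (mat 1 - N ** J) = (1/2) *\<^sub>R (mat 1 - S)"
    by (rule matrix_inv_unique)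
  then show ?thesis
    by (simp add: cayley_inverse_def)
qed

lemma cayley_square:
  fixes N S :: "real^'n^'n"
  assumes NN: "N ** N = - mat 1" and anti: "N ** S = - (S ** N)"
    and inv: "invertible (mat 1 - S)"
  shows "cayley N S ** cayley N S = - mat 1"
proof -
  let ?R = "matrix_inv (mat 1 - S)"
  have J: "cayley N S = (mat 1 - S) ** N ** ?R"
    using anti by (simp add: cayley_def matrix_add_ldistrib matrix_diff_rdistrib)
  have "cayley N S ** cayley N S = (mat 1 - S) ** N ** (?R ** (mat 1 - S)) ** N ** ?R"
    unfolding J by (simp add: matrix_mul_assoc)
  also have "\<dots> = (mat 1 - S) ** (N ** N) ** ?R"
    by (simp add: matrix_inv_left[OF inv] matrix_mul_assoc)
  also have "\<dots> = - ((mat 1 - S) ** ?R)"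
    by (simp only: NN matrix_mul_uminus_left matrix_mul_uminus_right matrix_mul_rid)
  finally show ?thesis
    by (simp add: matrix_inv_right[OF inv])
qed

lemma cayley_inverse_relation:
  fixes N J :: "real^'n^'n"
  assumes NN: "N ** N = - mat 1" and inv: "invertible (mat 1 - N ** J)"
  defines "S \<equiv> cayley_inverse N J"
  shows "invertible (mat 1 - S)" and "J ** (mat 1 - S) = N ** (mat 1 + S)"
proof -
  let ?P = "mat 1 - N ** J" and ?R = "matrix_inv (mat 1 - N ** J)"
  have S: "S = mat 1 - 2 *\<^sub>R ?R"
    by (simp add: S_def cayley_inverse_def)
  have IS: "mat 1 - S = 2 *\<^sub>R ?R"
    by (simp add: S)
  show "invertible (mat 1 - S)"
    unfolding IS by (simp add: scalar_invertible invertible_matrix_inv[OF inv])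
  have NP: "N ** ?P = N + J"
    by (simp add: matrix_diff_ldistrib matrix_mul_assoc NN matrix_mul_uminus_left)
  have JR: "J ** ?R = N - N ** ?R"
  proof -
    have "J ** ?R = (N ** ?P - N) ** ?R"
      by (simp add: NP)
    also have "\<dots> = N ** ?P ** ?R - N ** ?R"
      by (rule matrix_diff_rdistrib)
    also have "\<dots> = N - N ** ?R"
      by (simp only: matrix_inv_right[OF inv] matrix_mul_rid flip: matrix_mul_assoc)
    finally show ?thesis .
  qed
  have IpS: "mat 1 + S = 2 *\<^sub>R (mat 1 - ?R)"
    by (simp add: S algebra_simps scaleR_2)
  have "J ** (mat 1 - S) = 2 *\<^sub>R (J ** ?R)"
    by (simp add: IS matrix_scalar_ac scalar_matrix_assoc[symmetric])
  also have "\<dots> = N ** (mat 1 + S)"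
    by (simp add: IpS JR matrix_diff_ldistrib matrix_scalar_ac scalar_matrix_assoc[symmetric]
        scaleR_right_diff_distrib)
  finally show "J ** (mat 1 - S) = N ** (mat 1 + S)" .
qed

lemma cayley_inverse_anticommutes:
  fixes N J :: "real^'n^'n"
  assumes NN: "N ** N = - mat 1" and JJ: "J ** J = - mat 1"
    and inv: "invertible (mat 1 - N ** J)"
  defines "S \<equiv> cayley_inverse N J"
  shows "N ** S = - (S ** N)"
proof -
  let ?P = "mat 1 - N ** J" and ?R = "matrix_inv (mat 1 - N ** J)"
  have XNN: "X ** N ** N = - X" and XJJ: "X ** J ** J = - X" for X :: "real^'n^'n"
    by (simp_all add: NN JJ matrix_mul_uminus_right flip: matrix_mul_assoc)
  have PNP: "?P ** N ** ?P = ?P ** N + N ** ?P"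
    by (simp add: matrix_diff_ldistrib matrix_diff_rdistrib matrix_mul_assoc NN XNN XJJ
        matrix_mul_uminus_left matrix_mul_uminus_right algebra_simps)
  have "N = (?R ** ?P) ** N ** (?P ** ?R)"
    by (simp add: matrix_inv_left[OF inv] matrix_inv_right[OF inv])
  also have "\<dots> = ?R ** (?P ** N ** ?P) ** ?R"
    by (simp add: matrix_mul_assoc)
  also have "\<dots> = (?R ** ?P) ** N ** ?R + ?R ** N ** (?P ** ?R)"
    by (simp add: PNP matrix_add_ldistrib matrix_add_rdistrib matrix_mul_assoc)
  also have "\<dots> = N ** ?R + ?R ** N"
    by (simp add: matrix_inv_left[OF inv] matrix_inv_right[OF inv])
  finally have RN: "?R ** N = N - N ** ?R"
    by (metis add_diff_cancel_left')
  have NS: "N ** S = N - 2 *\<^sub>R (N ** ?R)"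
    by (simp add: S_def cayley_inverse_def matrix_diff_ldistrib matrix_scalar_ac
        scalar_matrix_assoc[symmetric])
  have SN: "S ** N = N - 2 *\<^sub>R (?R ** N)"
    by (simp add: S_def cayley_inverse_def matrix_diff_rdistrib scalar_matrix_assoc[symmetric])
  show ?thesis
    unfolding NS SN RN by (simp add: algebra_simps scaleR_2)
qed

section \<open>The domain of the Cayley parameter\<close>

lemma concave_on_bilinear_pairing:
  fixes B :: "'a::real_vector \<Rightarrow> 'a \<Rightarrow> real"
  assumes B: "bilinear B" and psd: "\<And>u. 0 \<le> B u u"
  shows "concave_on UNIV (\<lambda>u. B (w - u) (w + u))"
  unfolding concave_on_iff
proof (intro conjI ballI allI impI convex_UNIV)
  fix x y :: 'a and a b :: real
  assume "0 \<le> a" "0 \<le> b" "a + b = 1"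
  have bl: "linear (B u)" "linear (\<lambda>v. B v u)" for u
    using B by (auto simp: bilinear_def)
  have b: "b = 1 - a"
    using \<open>a + b = 1\<close> by simp
  have diff: "B (w - (a *\<^sub>R x + b *\<^sub>R y)) (w + (a *\<^sub>R x + b *\<^sub>R y))
      - (a * B (w - x) (w + x) + b * B (w - y) (w + y)) = a * b * B (x - y) (x - y)"
    unfolding b
    by (simp add: linear_add[OF bl(1)] linear_add[OF bl(2)] linear_diff[OF bl(1)] linear_diff[OF bl(2)]
        linear_scale[OF bl(1)] linear_scale[OF bl(2)] algebra_simps)
  show "a * B (w - x) (w + x) + b * B (w - y) (w + y)
      \<le> B (w - (a *\<^sub>R x + b *\<^sub>R y)) (w + (a *\<^sub>R x + b *\<^sub>R y))"
    using diff mult_nonneg_nonneg[OF mult_nonneg_nonneg[OF \<open>0 \<le> a\<close> \<open>0 \<le> b\<close>] psd[of "x - y"]]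
    by linarith
qed

definition cayley_tames ::
    "(real^'n \<Rightarrow> real^'n \<Rightarrow> real) \<Rightarrow> (real^'n) set \<Rightarrow> real^'n^'n \<Rightarrow> real^'n^'n \<Rightarrow> bool" where
  "cayley_tames \<omega> K N S \<longleftrightarrow> (\<forall>w. w \<notin> K \<longrightarrow> 0 < \<omega> (w - S *v w) (N *v (w + S *v w)))"

definition cayley_domain ::
    "(real^'n \<Rightarrow> real^'n \<Rightarrow> real) \<Rightarrow> (real^'n \<Rightarrow> real^'n \<Rightarrow> real) \<Rightarrow> real^'n^'n \<Rightarrow> (real^'n^'n) set" where
  "cayley_domain \<omega>0 \<omega>1 N = {S. N ** S = - (S ** N)
     \<and> (\<forall>k\<in>form_kernel \<omega>1. S *v k \<in> form_kernel \<omega>1)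
     \<and> cayley_tames \<omega>0 {0} N S \<and> cayley_tames \<omega>1 (form_kernel \<omega>1) N S}"

lemma tames_off_iff_cayley_tames:
  fixes N S J :: "real^'n^'n"
  assumes inv: "invertible (mat 1 - S)" and K: "subspace K" and SK: "\<forall>k\<in>K. S *v k \<in> K"
    and rel: "J ** (mat 1 - S) = N ** (mat 1 + S)"
  shows "tames_off \<omega> K J \<longleftrightarrow> cayley_tames \<omega> K N S"
proof -
  have PK: "\<forall>k\<in>K. (mat 1 - S) *v k \<in> K"
    using SK K by (simp add: matrix_vector_mult_diff_rdistrib subspace_diff)
  have "J *v ((mat 1 - S) *v w) = N *v (w + S *v w)" for w
    using arg_cong[OF rel, of "\<lambda>A. A *v w"]
    by (simp add: matrix_vector_mult_add_rdistrib flip: matrix_vector_mul_assoc)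
  then show ?thesis
    unfolding tames_off_change_of_variables[OF inv K PK] cayley_tames_def
    by (simp add: matrix_vector_mult_diff_rdistrib)
qed

lemma convex_cayley_tames:
  fixes \<omega> :: "real^'n \<Rightarrow> real^'n \<Rightarrow> real" and N :: "real^'n^'n"
  assumes B: "bilinear \<omega>" and nonneg: "\<And>u. 0 \<le> \<omega> u (N *v u)"
  shows "convex {S. cayley_tames \<omega> K N S}"
proof (rule convexI)
  fix X Y :: "real^'n^'n" and a b :: real
  assume X: "X \<in> {S. cayley_tames \<omega> K N S}" and Y: "Y \<in> {S. cayley_tames \<omega> K N S}"
    and ab: "0 \<le> a" "0 \<le> b" "a + b = 1"
  have "bilinear (\<lambda>x y. \<omega> x (N *v y))"
    using B by (auto simp: bilinear_def intro: linear_compose[of "(*v) N", unfolded o_def])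
  then have concave: "concave_on UNIV (\<lambda>u. \<omega> (w - u) (N *v (w + u)))" for w
    using concave_on_bilinear_pairing nonneg by blast
  show "a *\<^sub>R X + b *\<^sub>R Y \<in> {S. cayley_tames \<omega> K N S}"
    unfolding mem_Collect_eq cayley_tames_def
  proof (intro allI impI)
    fix w assume "w \<notin> K"
    let ?f = "\<lambda>u. \<omega> (w - u) (N *v (w + u))"
    have "0 < ?f (X *v w)" "0 < ?f (Y *v w)"
      using X Y \<open>w \<notin> K\<close> by (auto simp: cayley_tames_def)
    then have "0 < a * ?f (X *v w) + b * ?f (Y *v w)"
      using convexD[of "{0<..}" "?f (X *v w)" "?f (Y *v w)" a b] ab by simp
    also have "\<dots> \<le> ?f (a *\<^sub>R (X *v w) + b *\<^sub>R (Y *v w))"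
      using concave ab unfolding concave_on_iff by blast
    finally show "0 < ?f ((a *\<^sub>R X + b *\<^sub>R Y) *v w)"
      by (simp add: matrix_vector_mult_add_rdistrib scaleR_matrix_vector_assoc)
  qed
qed

lemma convex_cayley_domain:
  fixes \<omega>0 \<omega>1 :: "real^'n \<Rightarrow> real^'n \<Rightarrow> real" and N :: "real^'n^'n"
  assumes "bilinear \<omega>0" "bilinear \<omega>1"
    and "\<And>u. 0 \<le> \<omega>0 u (N *v u)" "\<And>u. 0 \<le> \<omega>1 u (N *v u)"
  shows "convex (cayley_domain \<omega>0 \<omega>1 N)"
proof -
  let ?K = "form_kernel \<omega>1"
  have "subspace {S :: real^'n^'n. N ** S = - (S ** N)}"
    by (auto simp: subspace_def matrix_add_ldistrib matrix_add_rdistrib matrix_scalar_ac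
        scalar_matrix_assoc[symmetric])
  moreover have "subspace {S :: real^'n^'n. \<forall>k\<in>?K. S *v k \<in> ?K}"
    using subspace_form_kernel[OF assms(2)]
    by (auto simp: subspace_def matrix_vector_mult_add_rdistrib subspace_add subspace_scale
        scaleR_matrix_vector_assoc[symmetric])
  ultimately have "convex ({S. N ** S = - (S ** N)} \<inter> ({S. \<forall>k\<in>?K. S *v k \<in> ?K}
      \<inter> ({S. cayley_tames \<omega>0 {0} N S} \<inter> {S. cayley_tames \<omega>1 ?K N S})))"
    by (intro convex_Int subspace_imp_convex convex_cayley_tames assms)
  then show ?thesis
    by (simp add: cayley_domain_def Collect_conj_eq)
qed

lemma cayley_mem_J_tau:
  fixes \<omega>0 \<omega>1 :: "real^'n \<Rightarrow> real^'n \<Rightarrow> real" and N S :: "real^'n^'n"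
  assumes B0: "bilinear \<omega>0" and B1: "bilinear \<omega>1"
    and N: "N \<in> J_tau \<omega>0 \<omega>1" and S: "S \<in> cayley_domain \<omega>0 \<omega>1 N"
  shows "invertible (mat 1 - S)" and "cayley N S \<in> J_tau \<omega>0 \<omega>1"
    and "cayley_inverse N (cayley N S) = S"
proof -
  let ?K = "form_kernel \<omega>1"
  have NN: "N ** N = - mat 1"
    using N by (simp add: J_tau_def complex_structures_def)
  have anti: "N ** S = - (S ** N)" and SK: "\<forall>k\<in>?K. S *v k \<in> ?K"
    and tames0: "cayley_tames \<omega>0 {0} N S" and tames1: "cayley_tames \<omega>1 ?K N S"
    using S by (auto simp: cayley_domain_def)
  show inv: "invertible (mat 1 - S)"
    unfolding invertible_iff_ker_zero
  proof (intro allI impI)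
    fix w :: "real^'n"
    assume "(mat 1 - S) *v w = 0"
    then have "w - S *v w = 0"
      by (simp add: matrix_vector_mult_diff_rdistrib)
    then show "w = 0"
      using tames0 bilinear_lzero[OF B0] unfolding cayley_tames_def by force
  qed
  have rel: "cayley N S ** (mat 1 - S) = N ** (mat 1 + S)"
    by (rule cayley_relation[OF inv])
  have "tames_off \<omega>0 {0} (cayley N S)" and "tames_off \<omega>1 ?K (cayley N S)"
    using tames0 tames1 SK subspace_form_kernel[OF B1]
    by (simp_all add: tames_off_iff_cayley_tames[OF inv _ _ rel])
  then show "cayley N S \<in> J_tau \<omega>0 \<omega>1"
    using cayley_square[OF NN anti inv]
    by (simp add: J_tau_def complex_structures_def tamed_strict_iff_tames_off
        tamed_degenerate_iff_tames_off)
  show "cayley_inverse N (cayley N S) = S"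
    by (rule cayley_inverse_eqI[OF NN rel])
qed

lemma cayley_inverse_mem_cayley_domain:
  fixes \<omega>0 \<omega>1 :: "real^'n \<Rightarrow> real^'n \<Rightarrow> real" and N J :: "real^'n^'n"
  assumes B0: "bilinear \<omega>0" and alt1: "alternating_form \<omega>1"
    and N: "N \<in> J_tau \<omega>0 \<omega>1" and J: "J \<in> J_tau \<omega>0 \<omega>1"
  shows "invertible (mat 1 - N ** J)" and "cayley_inverse N J \<in> cayley_domain \<omega>0 \<omega>1 N"
    and "cayley N (cayley_inverse N J) = J"
proof -
  let ?K = "form_kernel \<omega>1" and ?S = "cayley_inverse N J"
  have NN: "N ** N = - mat 1" and N0: "tamed_strict \<omega>0 N" and N1: "tamed_degenerate \<omega>1 N"
    using N by (auto simp: J_tau_def complex_structures_def)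
  have JJ: "J ** J = - mat 1" and J0: "tamed_strict \<omega>0 J" and J1: "tamed_degenerate \<omega>1 J"
    using J by (auto simp: J_tau_def complex_structures_def)
  show inv: "invertible (mat 1 - N ** J)"
    unfolding invertible_iff_ker_zero
  proof (intro allI impI)
    fix v :: "real^'n"
    assume "(mat 1 - N ** J) *v v = 0"
    then have "v = N *v (J *v v)"
      by (simp add: matrix_vector_mult_diff_rdistrib matrix_vector_mul_assoc)
    then have "N *v v = (N ** N) *v (J *v v)"
      by (metis matrix_vector_mul_assoc)
    then have "J *v v = - (N *v v)"
      by (simp add: NN matrix_vector_mult_diff_rdistrib[of 0 "mat 1", simplified])
    then have "\<omega>0 v (J *v v) = - \<omega>0 v (N *v v)"
      by (simp add: bilinear_rneg[OF B0])
    then show "v = 0"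
      using N0 J0 unfolding tamed_strict_def by force
  qed
  note S = cayley_inverse_relation[OF NN inv]
  have K: "subspace ?K"
    using alt1 subspace_form_kernel by (auto simp: alternating_form_def)
  have "\<forall>k\<in>?K. (mat 1 - N ** J) *v k \<in> ?K"
    using K tamed_degenerate_form_kernel_invariant[OF alt1] N1 J1
    by (simp add: matrix_vector_mult_diff_rdistrib subspace_diff flip: matrix_vector_mul_assoc)
  then have SK: "\<forall>k\<in>?K. ?S *v k \<in> ?K"
    using matrix_inv_invariant_subspace[OF inv K] K
    by (simp add: cayley_inverse_def matrix_vector_mult_diff_rdistrib subspace_diff subspace_scale
        flip: scaleR_matrix_vector_assoc)
  have "cayley_tames \<omega>0 {0} N ?S" and "cayley_tames \<omega>1 ?K N ?S"
    using J0 J1 SK K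
    by (simp_all flip: tames_off_iff_cayley_tames[OF S(1) _ _ S(2)]
        add: tamed_strict_iff_tames_off tamed_degenerate_iff_tames_off)
  then show "?S \<in> cayley_domain \<omega>0 \<omega>1 N"
    using cayley_inverse_anticommutes[OF NN JJ inv] SK by (simp add: cayley_domain_def)
  show "cayley N ?S = J"
    by (rule cayley_eqI[OF S(1) S(2)])
qed

lemma cayley_homeomorphism:
  fixes \<omega>0 \<omega>1 :: "real^'n \<Rightarrow> real^'n \<Rightarrow> real" and N :: "real^'n^'n"
  assumes B0: "bilinear \<omega>0" and alt1: "alternating_form \<omega>1" and N: "N \<in> J_tau \<omega>0 \<omega>1"
  shows "homeomorphism (cayley_domain \<omega>0 \<omega>1 N) (J_tau \<omega>0 \<omega>1) (cayley N) (cayley_inverse N)"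
proof -
  have B1: "bilinear \<omega>1"
    using alt1 by (simp add: alternating_form_def)
  note fwd = cayley_mem_J_tau[OF B0 B1 N] and bwd = cayley_inverse_mem_cayley_domain[OF B0 alt1 N]
  have "continuous_on (cayley_domain \<omega>0 \<omega>1 N) (cayley N)"
    unfolding cayley_def
    by (intro continuous_intros continuous_on_compose2[OF continuous_on_matrix_inv])
      (auto dest: fwd(1))
  moreover have "continuous_on (J_tau \<omega>0 \<omega>1) (cayley_inverse N)"
    unfolding cayley_inverse_def
    by (intro continuous_intros continuous_on_compose2[OF continuous_on_matrix_inv])
      (auto dest: bwd(1))
  ultimately show ?thesis
    using fwd bwd by (intro homeomorphismI) auto
qed

theorem lemmaA1:
  fixes \<omega>0 \<omega>1 :: "real^'n \<Rightarrow> real^'n \<Rightarrow> real"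
  assumes "even CARD('n)"
    and "alternating_form \<omega>0" and "nondegenerate_form \<omega>0"
    and "alternating_form \<omega>1"
    and "J_tau \<omega>0 \<omega>1 \<noteq> {}"
  shows "contractible (J_tau \<omega>0 \<omega>1)"
proof -
  obtain N where N: "N \<in> J_tau \<omega>0 \<omega>1"
    using assms(5) by blast
  have B0: "bilinear \<omega>0" and B1: "bilinear \<omega>1"
    using assms(2,4) by (simp_all add: alternating_form_def)
  have "0 \<le> \<omega>0 u (N *v u)" and "0 \<le> \<omega>1 u (N *v u)" for u
    using N tamed_strict_nonneg[OF B0]
    by (auto simp: J_tau_def tamed_degenerate_def)
  then have "convex (cayley_domain \<omega>0 \<omega>1 N)"
    by (intro convex_cayley_domain B0 B1)
  moreover have "cayley_domain \<omega>0 \<omega>1 N homeomorphic J_tau \<omega>0 \<omega>1"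
    using cayley_homeomorphism[OF B0 assms(4) N] homeomorphic_def by blast
  ultimately show ?thesis
    using convex_imp_contractible homeomorphic_contractible by blast
qed

end
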